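(* Let $(u_S,u_R)$ be an environment that is jointly-inclusive and satisfies partitional-unique-response and scant-indifferences. If commitment has no value, then the environment is felicitous.
   Context: $A=\{a_1,\dots,a_{|A|}\}$ and $\Omega$ are finite nonempty sets, $\mu_0$ a prior on $\Omega$ with $\mu_0(\omega)>0$ for all $\omega$, $M$ a finite message set with $|M|>\max\{|\Omega|,|A|\}$. An environment is a pair of functions $u_S,u_R:A\times\Omega\to[0,1]$. Messaging strategies $\sigma:\Omega\to\Delta M$, action strategies $\rho:M\to\Delta A$, $U_i(\sigma,\rho)=\sum_{\omega,m,a}\mu_0(\omega)\sigma(m|\omega)\rho(a|m)u_i(a,\omega)$. $(\sigma,\rho)$ is S-BR if $\sigma\in\arg\max_{\sigma'}U_S(\sigma',\rho)$ and R-BR if $\rho\in\arg\max_{\rho'}U_R(\sigma,\rho')$. The persuasion payoff is the maximum of $U_S$ over R-BR profiles; the cheap-talk payoff is the maximum over profiles that are S-BR and R-BR; commitment has no value if they are equal. Jointly-inclusive: for every $a\in A$ there is $\omega$ such that $u_S(a,\omega)>u_S(a',\omega)$ and $u_R(a,\omega)>u_R(a',\omega)$ for all $a'\neq a$. Partitional-unique-response: for every nonempty $\hat\Omega\subseteq\Omega$, $\arg\max_{a}\sum_{\omega\in\hat\Omega}\mu_0(\omega)u_R(a,\omega)$ is a singleton. Scant-indifferences: with $\mathbf u_S(a)=u_S(a,\cdot)\in\mathbb R^{|\Omega|}$, $\mathbf u_R(a)=u_R(a,\cdot)$, for each $i$ the expanded-indifference matrix $T^i$ has $|\Omega|$ columns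 and rows $\mathbf u_S(a_j)-\mathbf u_S(a_i)$ ($j\ne i$), $\mathbf u_R(a_j)-\mathbf u_R(a_i)$ ($j\ne i$), and the rows of the $|\Omega|\times|\Omega|$ identity; scant-indifferences holds if for each $i$ every matrix obtained from $T^i$ by deleting some rows has full rank. Felicitous: with $\Omega_i^{u_S}=\{\omega:a_i\in\arg\max_a u_S(a,\omega)\}$, for every $i$ with $\Omega_i^{u_S}\ne\emptyset$, $a_i\in\arg\max_a\sum_{\omega\in\Omega_i^{u_S}}\mu_0(\omega)u_R(a,\omega)$. *)

theory Defs
  imports "HOL-Analysis.Analysis"
begin

text \<open>Actions: finite type 'a; states: finite type 'w; messages: finite type 'm.\<close>

definition is_distr :: "('x::finite \<Rightarrow> real) \<Rightarrow> bool" where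
  "is_distr p \<longleftrightarrow> (\<forall>x. 0 \<le> p x) \<and> (\<Sum>x\<in>UNIV. p x) = 1"

definition msg_strat :: "('w::finite \<Rightarrow> 'm::finite \<Rightarrow> real) \<Rightarrow> bool" where
  "msg_strat \<sigma> \<longleftrightarrow> (\<forall>w. is_distr (\<sigma> w))"

definition act_strat :: "('m::finite \<Rightarrow> 'a::finite \<Rightarrow> real) \<Rightarrow> bool" where
  "act_strat \<rho> \<longleftrightarrow> (\<forall>m. is_distr (\<rho> m))"

definition payoff ::
  "('w::finite \<Rightarrow> real) \<Rightarrow> ('a::finite \<Rightarrow> 'w \<Rightarrow> real) \<Rightarrow>
   ('w \<Rightarrow> 'm::finite \<Rightarrow> real) \<Rightarrow> ('m \<Rightarrow> 'a \<Rightarrow> real) \<Rightarrow> real" where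
  "payoff \<mu> u \<sigma> \<rho> = (\<Sum>w\<in>UNIV. \<Sum>m\<in>UNIV. \<Sum>a\<in>UNIV. \<mu> w * \<sigma> w m * \<rho> m a * u a w)"

definition S_BR ::
  "('w::finite \<Rightarrow> real) \<Rightarrow> ('a::finite \<Rightarrow> 'w \<Rightarrow> real) \<Rightarrow>
   ('w \<Rightarrow> 'm::finite \<Rightarrow> real) \<Rightarrow> ('m \<Rightarrow> 'a \<Rightarrow> real) \<Rightarrow> bool" where
  "S_BR \<mu> uS \<sigma> \<rho> \<longleftrightarrow> msg_strat \<sigma> \<and>
     (\<forall>\<sigma>'. msg_strat \<sigma>' \<longrightarrow> payoff \<mu> uS \<sigma>' \<rho> \<le> payoff \<mu> uS \<sigma> \<rho>)"

definition R_BR ::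
  "('w::finite \<Rightarrow> real) \<Rightarrow> ('a::finite \<Rightarrow> 'w \<Rightarrow> real) \<Rightarrow>
   ('w \<Rightarrow> 'm::finite \<Rightarrow> real) \<Rightarrow> ('m \<Rightarrow> 'a \<Rightarrow> real) \<Rightarrow> bool" where
  "R_BR \<mu> uR \<sigma> \<rho> \<longleftrightarrow> act_strat \<rho> \<and>
     (\<forall>\<rho>'. act_strat \<rho>' \<longrightarrow> payoff \<mu> uR \<sigma> \<rho>' \<le> payoff \<mu> uR \<sigma> \<rho>)"

text \<open>Profiles range over pairs of strategies (sigma, rho) with both components valid strategies.
  The payoffs below are maxima in the paper; we write them as suprema (the maxima exist).\<close>

definition persuasion_payoff ::
  "('w::finite \<Rightarrow> real) \<Rightarrow> ('a::finite \<Rightarrow> 'w \<Rightarrow> real) \<Rightarrow> ('a \<Rightarrow> 'w \<Rightarrow> real) \<Rightarrow>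
   'm::finite itself \<Rightarrow> real" where
  "persuasion_payoff \<mu> uS uR (_::'m itself) =
     Sup {payoff \<mu> uS \<sigma> \<rho> | (\<sigma>::'w \<Rightarrow> 'm \<Rightarrow> real) \<rho>.
            msg_strat \<sigma> \<and> R_BR \<mu> uR \<sigma> \<rho>}"

definition cheap_talk_payoff ::
  "('w::finite \<Rightarrow> real) \<Rightarrow> ('a::finite \<Rightarrow> 'w \<Rightarrow> real) \<Rightarrow> ('a \<Rightarrow> 'w \<Rightarrow> real) \<Rightarrow>
   'm::finite itself \<Rightarrow> real" where
  "cheap_talk_payoff \<mu> uS uR (_::'m itself) =
     Sup {payoff \<mu> uS \<sigma> \<rho> | (\<sigma>::'w \<Rightarrow> 'm \<Rightarrow> real) \<rho>.
            S_BR \<mu> uS \<sigma> \<rho> \<and> R_BR \<mu> uR \<sigma> \<rho>}"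

definition commitment_no_value ::
  "('w::finite \<Rightarrow> real) \<Rightarrow> ('a::finite \<Rightarrow> 'w \<Rightarrow> real) \<Rightarrow> ('a \<Rightarrow> 'w \<Rightarrow> real) \<Rightarrow>
   'm::finite itself \<Rightarrow> bool" where
  "commitment_no_value \<mu> uS uR M \<longleftrightarrow>
     persuasion_payoff \<mu> uS uR M = cheap_talk_payoff \<mu> uS uR M"

definition argmax_set :: "('a \<Rightarrow> real) \<Rightarrow> 'a set" where
  "argmax_set f = {a. \<forall>a'. f a' \<le> f a}"

definition jointly_inclusive :: "('a \<Rightarrow> 'w \<Rightarrow> real) \<Rightarrow> ('a \<Rightarrow> 'w \<Rightarrow> real) \<Rightarrow> bool" where
  "jointly_inclusive uS uR \<longleftrightarrow>
     (\<forall>a. \<exists>w. \<forall>a'. a' \<noteq> a \<longrightarrow> uS a' w < uS a w \<and> uR a' w < uR a w)"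

definition partitional_unique_response ::
  "('w::finite \<Rightarrow> real) \<Rightarrow> ('a \<Rightarrow> 'w \<Rightarrow> real) \<Rightarrow> bool" where
  "partitional_unique_response \<mu> uR \<longleftrightarrow>
     (\<forall>W::'w set. W \<noteq> {} \<longrightarrow>
        is_singleton (argmax_set (\<lambda>a. \<Sum>w\<in>W. \<mu> w * uR a w)))"

text \<open>Rows of the expanded-indifference matrix T^i for action a: labels
  Inl (b, True) (b ~= a): row uS(b) - uS(a);  Inl (b, False) (b ~= a): row uR(b) - uR(a);
  Inr w: row e_w of the identity.\<close>

definition T_labels :: "'a \<Rightarrow> (('a \<times> bool) + 'w) set" where
  "T_labels a = {Inl (b, t) | b t. b \<noteq> a} \<union> range Inr"

definition T_row :: "('a \<Rightarrow> 'w::finite \<Rightarrow> real) \<Rightarrow> ('a \<Rightarrow> 'w \<Rightarrow> real) \<Rightarrow> 'a \<Rightarrow>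
    (('a \<times> bool) + 'w) \<Rightarrow> real ^ 'w" where
  "T_row uS uR a l = (case l of
       Inl (b, True) \<Rightarrow> (\<chi> w. uS b w - uS a w)
     | Inl (b, False) \<Rightarrow> (\<chi> w. uR b w - uR a w)
     | Inr w0 \<Rightarrow> axis w0 1)"

text \<open>The matrix with row set I has full rank iff its rank (dimension of its row space)
  equals min (number of rows, number of columns).\<close>

definition scant_indifferences ::
  "('a::finite \<Rightarrow> 'w::finite \<Rightarrow> real) \<Rightarrow> ('a \<Rightarrow> 'w \<Rightarrow> real) \<Rightarrow> bool" where
  "scant_indifferences uS uR \<longleftrightarrow>
     (\<forall>a. \<forall>I \<subseteq> T_labels a.
        dim (span (T_row uS uR a ` I)) = min (card I) CARD('w))"

definition felicitous ::
  "('w::finite \<Rightarrow> real) \<Rightarrow> ('a \<Rightarrow> 'w \<Rightarrow> real) \<Rightarrow> ('a \<Rightarrow> 'w \<Rightarrow> real) \<Rightarrow> bool" where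
  "felicitous \<mu> uS uR \<longleftrightarrow>
     (\<forall>a. let Wa = {w. a \<in> argmax_set (\<lambda>a'. uS a' w)} in
        Wa \<noteq> {} \<longrightarrow> a \<in> argmax_set (\<lambda>a'. \<Sum>w\<in>Wa. \<mu> w * uR a' w))"

end

theory Submission
  imports Defs
begin

text \<open>
  Fix a sender-optimal cheap-talk equilibrium. With at least as many messages as actions every
  obedient state-action distribution is implementable (revelation principle), so when commitment
  has no value the distribution induced by the equilibrium is optimal among all obedient ones:
  no perturbation respecting the binding obedience constraints can raise the sender's payoff.
  If a message on path induced two actions, the sender would be indifferent between them and the
  posterior would be orthogonal to the binding rows of the expanded-indifference matrix; scant
  indifferences then yield a profitable perturbation. Hence every state induces a single action,
  which by sender optimality is the sender's best among the induced actions. At the jointly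
  inclusive state of an action, shifting mass onto that action is again profitable (partitional
  unique response makes the competing constraints slack), so every action is induced. Thus each
  state induces the sender's favourite action, and obedience of this partition is felicity.
\<close>

definition point_mass :: "'x \<Rightarrow> 'x \<Rightarrow> real" where
  "point_mass a c = (if c = a then 1 else 0)"

definition move_mass :: "('x \<Rightarrow> real) \<Rightarrow> 'x \<Rightarrow> 'x \<Rightarrow> 'x \<Rightarrow> real" where
  "move_mass p a b c = p c + p a * (point_mass b c - point_mass a c)"

lemma sum_point_mass_mult [simp]:
  fixes f :: "'x::finite \<Rightarrow> real"
  shows "(\<Sum>c\<in>UNIV. point_mass a c * f c) = f a"
  by (simp add: point_mass_def if_distrib[of "\<lambda>x. x * _"] cong: if_cong)

lemma sum_mult_point_mass [simp]:
  fixes f :: "'x::finite \<Rightarrow> real"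
  shows "(\<Sum>a\<in>UNIV. f a * point_mass a c) = f c"
  by (simp add: point_mass_def if_distrib[of "\<lambda>x. _ * x"] eq_commute[of c] cong: if_cong)

lemma sum_weighted_point_mass:
  fixes f g :: "'x::finite \<Rightarrow> real"
  shows "(\<Sum>x\<in>UNIV. f x * point_mass a x * g x) = f a * g a"
  by (simp add: point_mass_def if_distrib[of "\<lambda>y. _ * y * _"] cong: if_cong)

lemma is_distr_point_mass: "is_distr (point_mass (a::'x::finite))"
  unfolding is_distr_def using sum_point_mass_mult[of a "\<lambda>_. 1"] by (simp add: point_mass_def)

lemma is_distr_nonneg: "is_distr p \<Longrightarrow> 0 \<le> p x"
  unfolding is_distr_def by blast

lemma is_distr_le_1: "is_distr p \<Longrightarrow> p x \<le> 1"
  unfolding is_distr_def by (metis UNIV_I finite_class.finite_UNIV member_le_sum)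

lemma is_distr_ex_pos:
  assumes "is_distr p" shows "\<exists>x. 0 < p x"
proof (rule ccontr)
  assume "\<nexists>x. 0 < p x"
  then have "(\<Sum>x\<in>UNIV. p x) \<le> 0" by (intro sum_nonpos) (simp add: not_less)
  then show False using assms unfolding is_distr_def by simp
qed

lemma is_distr_eq_point_mass:
  fixes p :: "'x::finite \<Rightarrow> real"
  assumes "is_distr p" and "\<And>c. c \<noteq> a \<Longrightarrow> p c = 0"
  shows "p = point_mass a"
proof -
  have "(\<Sum>c\<in>UNIV. p c) = p a"
    using assms(2) by (subst sum.remove[of UNIV a]) auto
  then have "p a = 1"
    using assms(1) unfolding is_distr_def by simp
  then show ?thesis
    using assms(2) unfolding point_mass_def by (intro ext) simp
qed

lemma sum_move_mass_diff:
  fixes f :: "'x::finite \<Rightarrow> real"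
  shows "(\<Sum>c\<in>UNIV. (move_mass p a b c - p c) * f c) = p a * (f b - f a)"
proof -
  have "(move_mass p a b c - p c) * f c = p a * (point_mass b c * f c - point_mass a c * f c)" for c
    by (simp add: move_mass_def algebra_simps)
  then show ?thesis by (simp add: sum_subtractf flip: sum_distrib_left)
qed

lemma is_distr_move_mass:
  assumes "is_distr p" shows "is_distr (move_mass p a b)"
proof -
  have "(\<Sum>c\<in>UNIV. move_mass p a b c) = (\<Sum>c\<in>UNIV. p c) + (\<Sum>c\<in>UNIV. (move_mass p a b c - p c) * 1)"
    by (simp add: sum_subtractf)
  then show ?thesis
    using assms unfolding is_distr_def sum_move_mass_diff
    by (auto simp: move_mass_def point_mass_def)
qed

(* Unnormalised: the probability of the message m is not divided out. *)
definition posterior_value ::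
  "('w::finite \<Rightarrow> real) \<Rightarrow> ('a \<Rightarrow> 'w \<Rightarrow> real) \<Rightarrow> ('w \<Rightarrow> 'm \<Rightarrow> real) \<Rightarrow> 'm \<Rightarrow> 'a \<Rightarrow> real" where
  "posterior_value \<mu> u \<sigma> m a = (\<Sum>w\<in>UNIV. \<mu> w * \<sigma> w m * u a w)"

definition response_payoff :: "('a::finite \<Rightarrow> 'w \<Rightarrow> real) \<Rightarrow> ('m \<Rightarrow> 'a \<Rightarrow> real) \<Rightarrow> 'm \<Rightarrow> 'w \<Rightarrow> real" where
  "response_payoff u \<rho> m w = (\<Sum>a\<in>UNIV. \<rho> m a * u a w)"

lemma payoff_by_message:
  "payoff \<mu> u \<sigma> \<rho> = (\<Sum>m\<in>UNIV. \<Sum>a\<in>UNIV. \<rho> m a * posterior_value \<mu> u \<sigma> m a)"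
proof -
  have "payoff \<mu> u \<sigma> \<rho> = (\<Sum>m\<in>UNIV. \<Sum>a\<in>UNIV. \<Sum>w\<in>UNIV. \<mu> w * \<sigma> w m * \<rho> m a * u a w)"
    unfolding payoff_def by (subst sum.swap) (rule sum.cong[OF refl], rule sum.swap)
  then show ?thesis
    unfolding posterior_value_def by (simp add: sum_distrib_left algebra_simps)
qed

lemma payoff_by_state:
  "payoff \<mu> u \<sigma> \<rho> = (\<Sum>w\<in>UNIV. \<mu> w * (\<Sum>m\<in>UNIV. \<sigma> w m * response_payoff u \<rho> m w))"
  unfolding payoff_def response_payoff_def by (simp add: sum_distrib_left algebra_simps)

lemma payoff_update_response:
  "payoff \<mu> u \<sigma> (\<rho>(m := q)) =
     payoff \<mu> u \<sigma> \<rho> + (\<Sum>a\<in>UNIV. (q a - \<rho> m a) * posterior_value \<mu> u \<sigma> m a)"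
proof -
  have "payoff \<mu> u \<sigma> (\<rho>(m := q)) - payoff \<mu> u \<sigma> \<rho> =
      (\<Sum>m'\<in>UNIV. \<Sum>a\<in>UNIV. ((\<rho>(m := q)) m' a - \<rho> m' a) * posterior_value \<mu> u \<sigma> m' a)"
    unfolding payoff_by_message by (simp add: left_diff_distrib sum_subtractf)
  also have "\<dots> = (\<Sum>a\<in>UNIV. (q a - \<rho> m a) * posterior_value \<mu> u \<sigma> m a)"
    by (subst sum.remove[of UNIV m]) auto
  finally show ?thesis by simp
qed

lemma payoff_update_message:
  "payoff \<mu> u (\<sigma>(w := q)) \<rho> =
     payoff \<mu> u \<sigma> \<rho> + \<mu> w * (\<Sum>m\<in>UNIV. (q m - \<sigma> w m) * response_payoff u \<rho> m w)"
proof -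
  have "payoff \<mu> u (\<sigma>(w := q)) \<rho> - payoff \<mu> u \<sigma> \<rho> =
      (\<Sum>w'\<in>UNIV. \<mu> w' * (\<Sum>m\<in>UNIV. ((\<sigma>(w := q)) w' m - \<sigma> w' m) * response_payoff u \<rho> m w'))"
    unfolding payoff_by_state by (simp add: left_diff_distrib right_diff_distrib sum_subtractf)
  also have "\<dots> = \<mu> w * (\<Sum>m\<in>UNIV. (q m - \<sigma> w m) * response_payoff u \<rho> m w)"
    by (subst sum.remove[of UNIV w]) auto
  finally show ?thesis by simp
qed

lemma payoff_move_response_mass:
  "payoff \<mu> u \<sigma> (\<rho>(m := move_mass (\<rho> m) a b)) =
     payoff \<mu> u \<sigma> \<rho> + \<rho> m a * (posterior_value \<mu> u \<sigma> m b - posterior_value \<mu> u \<sigma> m a)"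
  unfolding payoff_update_response sum_move_mass_diff ..

lemma payoff_move_message_mass:
  "payoff \<mu> u (\<sigma>(w := move_mass (\<sigma> w) m m')) \<rho> =
     payoff \<mu> u \<sigma> \<rho> + \<mu> w * \<sigma> w m * (response_payoff u \<rho> m' w - response_payoff u \<rho> m w)"
  unfolding payoff_update_message sum_move_mass_diff by simp

lemma R_BR_iff_supported_on_best:
  fixes \<sigma> :: "'w::finite \<Rightarrow> 'm::finite \<Rightarrow> real" and \<rho> :: "'m \<Rightarrow> 'a::finite \<Rightarrow> real"
  shows "R_BR \<mu> u \<sigma> \<rho> \<longleftrightarrow> act_strat \<rho> \<and>
     (\<forall>m a b. 0 < \<rho> m a \<longrightarrow> posterior_value \<mu> u \<sigma> m b \<le> posterior_value \<mu> u \<sigma> m a)"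
  (is "_ \<longleftrightarrow> _ \<and> (\<forall>m a b. _ \<longrightarrow> ?X m b \<le> ?X m a)")
proof safe
  fix m a b
  assume R: "R_BR \<mu> u \<sigma> \<rho>" and pos: "0 < \<rho> m a"
  then have "act_strat (\<rho>(m := move_mass (\<rho> m) a b))"
    unfolding R_BR_def act_strat_def by (simp add: is_distr_move_mass)
  then have "payoff \<mu> u \<sigma> (\<rho>(m := move_mass (\<rho> m) a b)) \<le> payoff \<mu> u \<sigma> \<rho>"
    using R unfolding R_BR_def by blast
  then show "?X m b \<le> ?X m a"
    using pos unfolding payoff_move_response_mass by (simp add: mult_le_0_iff)
next
  assume as: "act_strat \<rho>" and best: "\<forall>m a b. 0 < \<rho> m a \<longrightarrow> ?X m b \<le> ?X m a"
  define V where "V m = (\<Sum>a\<in>UNIV. \<rho> m a * ?X m a)" for m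
  have le_V: "?X m b \<le> V m" for m b
  proof -
    have "?X m b = (\<Sum>a\<in>UNIV. \<rho> m a * ?X m b)"
      using as by (simp add: act_strat_def is_distr_def flip: sum_distrib_right)
    also have "\<dots> \<le> V m"
      unfolding V_def using as best
      by (intro sum_mono) (metis act_strat_def is_distr_nonneg less_eq_real_def mult_left_mono mult_zero_left)
    finally show ?thesis .
  qed
  show "R_BR \<mu> u \<sigma> \<rho>"
    unfolding R_BR_def
  proof (intro conjI allI impI)
    fix \<rho>' :: "'m \<Rightarrow> 'a \<Rightarrow> real"
    assume as': "act_strat \<rho>'"
    have "payoff \<mu> u \<sigma> \<rho>' \<le> (\<Sum>m\<in>UNIV. \<Sum>b\<in>UNIV. \<rho>' m b * V m)"
      unfolding payoff_by_message using as'
      by (intro sum_mono mult_left_mono le_V) (simp add: act_strat_def is_distr_def)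
    also have "\<dots> = payoff \<mu> u \<sigma> \<rho>"
      using as' by (simp add: payoff_by_message V_def act_strat_def is_distr_def flip: sum_distrib_right)
    finally show "payoff \<mu> u \<sigma> \<rho>' \<le> payoff \<mu> u \<sigma> \<rho>" .
  qed (rule as)
qed (simp add: R_BR_def)

lemma S_BR_message_optimal:
  assumes S: "S_BR \<mu> u \<sigma> \<rho>" and "0 < \<mu> w" and "0 < \<sigma> w m"
  shows "response_payoff u \<rho> m' w \<le> response_payoff u \<rho> m w"
proof -
  have "msg_strat (\<sigma>(w := move_mass (\<sigma> w) m m'))"
    using S unfolding S_BR_def msg_strat_def by (simp add: is_distr_move_mass)
  then have "payoff \<mu> u (\<sigma>(w := move_mass (\<sigma> w) m m')) \<rho> \<le> payoff \<mu> u \<sigma> \<rho>"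
    using S unfolding S_BR_def by blast
  then show ?thesis
    using assms(2,3) unfolding payoff_move_message_mass by (simp add: mult_le_0_iff)
qed

section \<open>Outcomes and obedience\<close>

definition induced_outcome ::
  "('w \<Rightarrow> 'm::finite \<Rightarrow> real) \<Rightarrow> ('m \<Rightarrow> 'a \<Rightarrow> real) \<Rightarrow> 'w \<Rightarrow> 'a \<Rightarrow> real" where
  "induced_outcome \<sigma> \<rho> w a = (\<Sum>m\<in>UNIV. \<sigma> w m * \<rho> m a)"

definition outcome_payoff :: "('w::finite \<Rightarrow> real) \<Rightarrow> ('a::finite \<Rightarrow> 'w \<Rightarrow> real) \<Rightarrow> ('w \<Rightarrow> 'a \<Rightarrow> real) \<Rightarrow> real" where
  "outcome_payoff \<mu> u \<pi> = (\<Sum>w\<in>UNIV. \<Sum>a\<in>UNIV. \<mu> w * \<pi> w a * u a w)"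

definition obedience_gain ::
  "('w::finite \<Rightarrow> real) \<Rightarrow> ('a \<Rightarrow> 'w \<Rightarrow> real) \<Rightarrow> ('w \<Rightarrow> 'a \<Rightarrow> real) \<Rightarrow> 'a \<Rightarrow> 'a \<Rightarrow> real" where
  "obedience_gain \<mu> u \<pi> a b = (\<Sum>w\<in>UNIV. \<mu> w * \<pi> w a * (u a w - u b w))"

definition obedient_outcome :: "('w::finite \<Rightarrow> real) \<Rightarrow> ('a::finite \<Rightarrow> 'w \<Rightarrow> real) \<Rightarrow> ('w \<Rightarrow> 'a \<Rightarrow> real) \<Rightarrow> bool" where
  "obedient_outcome \<mu> u \<pi> \<longleftrightarrow> (\<forall>w. is_distr (\<pi> w)) \<and> (\<forall>a b. 0 \<le> obedience_gain \<mu> u \<pi> a b)"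

lemma payoff_eq_outcome_payoff: "payoff \<mu> u \<sigma> \<rho> = outcome_payoff \<mu> u (induced_outcome \<sigma> \<rho>)"
  unfolding payoff_def outcome_payoff_def induced_outcome_def
proof (intro sum.cong refl)
  fix w
  show "(\<Sum>m\<in>UNIV. \<Sum>a\<in>UNIV. \<mu> w * \<sigma> w m * \<rho> m a * u a w) =
      (\<Sum>a\<in>UNIV. \<mu> w * (\<Sum>m\<in>UNIV. \<sigma> w m * \<rho> m a) * u a w)"
    by (subst sum.swap) (simp add: sum_distrib_left sum_distrib_right mult.assoc)
qed

lemma obedience_gain_induced_outcome:
  "obedience_gain \<mu> u (induced_outcome \<sigma> \<rho>) a b =
     (\<Sum>m\<in>UNIV. \<rho> m a * (posterior_value \<mu> u \<sigma> m a - posterior_value \<mu> u \<sigma> m b))"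
proof -
  have "obedience_gain \<mu> u (induced_outcome \<sigma> \<rho>) a b =
      (\<Sum>w\<in>UNIV. \<Sum>m\<in>UNIV. \<rho> m a * (\<mu> w * \<sigma> w m * u a w - \<mu> w * \<sigma> w m * u b w))"
    unfolding obedience_gain_def induced_outcome_def
    by (simp add: sum_distrib_left sum_distrib_right algebra_simps)
  then show ?thesis
    unfolding posterior_value_def
    by (subst (asm) sum.swap) (simp add: sum_distrib_left flip: sum_subtractf)
qed

lemma is_distr_induced_outcome:
  assumes "msg_strat \<sigma>" and "act_strat \<rho>"
  shows "is_distr (induced_outcome \<sigma> \<rho> w)"
  unfolding is_distr_def
proof (intro conjI allI)
  show "0 \<le> induced_outcome \<sigma> \<rho> w a" for a
    using assms unfolding induced_outcome_def msg_strat_def act_strat_def is_distr_def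
    by (auto intro!: sum_nonneg)
  have "(\<Sum>a\<in>UNIV. induced_outcome \<sigma> \<rho> w a) = (\<Sum>m\<in>UNIV. \<sigma> w m * (\<Sum>a\<in>UNIV. \<rho> m a))"
    unfolding induced_outcome_def by (subst sum.swap) (simp add: sum_distrib_left)
  then show "(\<Sum>a\<in>UNIV. induced_outcome \<sigma> \<rho> w a) = 1"
    using assms unfolding msg_strat_def act_strat_def is_distr_def by simp
qed

lemma R_BR_obedient_outcome:
  assumes "msg_strat \<sigma>" and R: "R_BR \<mu> u \<sigma> \<rho>"
  shows "obedient_outcome \<mu> u (induced_outcome \<sigma> \<rho>)"
proof -
  have as: "act_strat \<rho>" and best: "\<And>m a b. 0 < \<rho> m a \<Longrightarrow>
      posterior_value \<mu> u \<sigma> m b \<le> posterior_value \<mu> u \<sigma> m a"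
    using R unfolding R_BR_iff_supported_on_best by auto
  have "0 \<le> \<rho> m a * (posterior_value \<mu> u \<sigma> m a - posterior_value \<mu> u \<sigma> m b)" for m a b
    using best[of m a b] as[unfolded act_strat_def, rule_format, THEN is_distr_nonneg, of m a]
    by (cases "\<rho> m a = 0") auto
  then show ?thesis
    unfolding obedient_outcome_def obedience_gain_induced_outcome
    using is_distr_induced_outcome[OF assms(1) as] by (auto intro: sum_nonneg)
qed

lemma outcome_payoff_perturb:
  "outcome_payoff \<mu> u (\<lambda>w c. \<pi> w c + e * D w c) = outcome_payoff \<mu> u \<pi> + e * outcome_payoff \<mu> u D"
  unfolding outcome_payoff_def by (simp add: algebra_simps sum.distrib sum_distrib_left)

lemma obedience_gain_perturb:
  "obedience_gain \<mu> u (\<lambda>w c. \<pi> w c + e * D w c) a b =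
     obedience_gain \<mu> u \<pi> a b + e * obedience_gain \<mu> u D a b"
proof -
  have "\<mu> w * (\<pi> w a + e * D w a) * (u a w - u b w) =
      \<mu> w * \<pi> w a * (u a w - u b w) + e * (\<mu> w * D w a * (u a w - u b w))" for w
    by (simp add: algebra_simps)
  then show ?thesis
    unfolding obedience_gain_def by (simp add: sum.distrib sum_distrib_left)
qed

lemma eventually_nonneg_at_right_0:
  fixes c s :: real
  assumes "0 < c \<or> 0 \<le> c \<and> 0 \<le> s"
  shows "\<forall>\<^sub>F e in at_right 0. 0 \<le> c + e * s"
  using assms
proof
  assume "0 < c"
  moreover have "((\<lambda>e. c + e * s) \<longlongrightarrow> c) (at_right 0)"
    by (auto intro!: tendsto_eq_intros)
  ultimately have "\<forall>\<^sub>F e in at_right 0. 0 < c + e * s"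
    by (auto dest: order_tendstoD(1))
  then show ?thesis
    by (auto elim: eventually_mono)
next
  assume "0 \<le> c \<and> 0 \<le> s"
  then show ?thesis
    using eventually_at_right_less[of "0::real"] by (auto elim: eventually_mono)
qed

lemma obedient_outcome_perturb:
  assumes obedient: "obedient_outcome \<mu> u \<pi>"
    and sum_zero: "\<And>w. (\<Sum>c\<in>UNIV. D w c) = 0"
    and support: "\<And>w c. 0 < \<pi> w c \<or> 0 \<le> D w c"
    and slack: "\<And>a b. 0 < obedience_gain \<mu> u \<pi> a b \<or> 0 \<le> obedience_gain \<mu> u D a b"
  shows "\<exists>e>0. obedient_outcome \<mu> u (\<lambda>w c. \<pi> w c + e * D w c)"
proof -
  have "\<forall>\<^sub>F e in at_right 0. 0 \<le> \<pi> w c + e * D w c" for w c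
    using obedient support[of w c] unfolding obedient_outcome_def
    by (intro eventually_nonneg_at_right_0) (auto dest: is_distr_nonneg)
  moreover have "\<forall>\<^sub>F e in at_right 0. 0 \<le> obedience_gain \<mu> u \<pi> a b + e * obedience_gain \<mu> u D a b" for a b
    using obedient slack[of a b] unfolding obedient_outcome_def
    by (intro eventually_nonneg_at_right_0) auto
  ultimately have "\<forall>\<^sub>F e in at_right 0. 0 < e \<and> (\<forall>w c. 0 \<le> \<pi> w c + e * D w c) \<and>
      (\<forall>a b. 0 \<le> obedience_gain \<mu> u \<pi> a b + e * obedience_gain \<mu> u D a b)"
    by (intro eventually_conj eventually_all_finite eventually_at_right_less)
  then obtain e where e: "0 < e" "\<forall>w c. 0 \<le> \<pi> w c + e * D w c"
      "\<forall>a b. 0 \<le> obedience_gain \<mu> u \<pi> a b + e * obedience_gain \<mu> u D a b"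
    using eventually_happens'[OF trivial_limit_at_right_real] by blast
  have "(\<Sum>c\<in>UNIV. \<pi> w c + e * D w c) = 1" for w
    using obedient sum_zero[of w] unfolding obedient_outcome_def is_distr_def
    by (simp add: sum.distrib flip: sum_distrib_left)
  then show ?thesis
    using e unfolding obedient_outcome_def is_distr_def obedience_gain_perturb by auto
qed

section \<open>Revelation principle and existence of optimal equilibria\<close>

lemma sum_range_inj:
  fixes f :: "'a::finite \<Rightarrow> 'm::finite" and g :: "'a \<Rightarrow> real"
  assumes "inj f"
  shows "(\<Sum>m\<in>UNIV. if m \<in> range f then g (inv f m) else 0) = (\<Sum>a\<in>UNIV. g a)"
proof -
  have "(\<Sum>m\<in>UNIV. if m \<in> range f then g (inv f m) else 0) = (\<Sum>m\<in>range f. g (inv f m))"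
    by (simp add: sum.If_cases Int_absorb1)
  also have "\<dots> = (\<Sum>a\<in>UNIV. g a)"
    using assms by (simp add: sum.reindex)
  finally show ?thesis .
qed

theorem obedient_outcome_implementable:
  fixes \<pi> :: "'w::finite \<Rightarrow> 'a::finite \<Rightarrow> real"
  assumes card: "CARD('a) \<le> CARD('m::finite)" and obedient: "obedient_outcome \<mu> u \<pi>"
  shows "\<exists>(\<sigma>::'w \<Rightarrow> 'm \<Rightarrow> real) \<rho>. msg_strat \<sigma> \<and> R_BR \<mu> u \<sigma> \<rho> \<and> induced_outcome \<sigma> \<rho> = \<pi>"
proof -
  obtain f :: "'a \<Rightarrow> 'm" where f: "inj f"
    using card_le_inj[of "UNIV :: 'a set" "UNIV :: 'm set"] card by auto
  define \<sigma> :: "'w \<Rightarrow> 'm \<Rightarrow> real" where "\<sigma> w m = (if m \<in> range f then \<pi> w (inv f m) else 0)" for w m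
  define \<rho> :: "'m \<Rightarrow> 'a \<Rightarrow> real" where "\<rho> m = point_mass (inv f m)" for m
  have sum_\<sigma>: "(\<Sum>m\<in>UNIV. \<sigma> w m * h m) = (\<Sum>a\<in>UNIV. \<pi> w a * h (f a))" for w h
  proof -
    have "(\<Sum>m\<in>UNIV. \<sigma> w m * h m) =
        (\<Sum>m\<in>UNIV. if m \<in> range f then \<pi> w (inv f m) * h (f (inv f m)) else 0)"
      unfolding \<sigma>_def by (intro sum.cong) (auto simp: f_inv_into_f)
    then show ?thesis using sum_range_inj[OF f] by simp
  qed
  have \<pi>_nonneg: "0 \<le> \<pi> w a" for w a
    using obedient unfolding obedient_outcome_def by (auto dest: is_distr_nonneg)
  have "msg_strat \<sigma>"
    using sum_\<sigma>[of _ "\<lambda>_. 1"] obedient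
    unfolding msg_strat_def is_distr_def obedient_outcome_def by (simp add: \<sigma>_def \<pi>_nonneg)
  moreover have "induced_outcome \<sigma> \<rho> = \<pi>"
    by (intro ext) (simp add: induced_outcome_def sum_\<sigma> \<rho>_def f)
  moreover have "R_BR \<mu> u \<sigma> \<rho>"
    unfolding R_BR_iff_supported_on_best
  proof (intro conjI allI impI)
    show "act_strat \<rho>"
      unfolding act_strat_def \<rho>_def by (simp add: is_distr_point_mass)
    fix m a b
    assume "0 < \<rho> m a"
    then have a: "a = inv f m" unfolding \<rho>_def point_mass_def by (simp split: if_splits)
    have "posterior_value \<mu> u \<sigma> m c = (if m \<in> range f then \<Sum>w\<in>UNIV. \<mu> w * \<pi> w a * u c w else 0)" for c
      unfolding posterior_value_def \<sigma>_def a by simp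
    moreover have "0 \<le> obedience_gain \<mu> u \<pi> a b"
      using obedient unfolding obedient_outcome_def by blast
    ultimately show "posterior_value \<mu> u \<sigma> m b \<le> posterior_value \<mu> u \<sigma> m a"
      unfolding obedience_gain_def by (simp add: right_diff_distrib sum_subtractf)
  qed
  ultimately show ?thesis by blast
qed

lemma payoff_le_sum_prior:
  assumes ms: "msg_strat \<sigma>" and as: "act_strat \<rho>"
    and \<mu>: "\<forall>w. 0 \<le> \<mu> w" and u: "\<forall>a w. u a w \<le> 1"
  shows "payoff \<mu> u \<sigma> \<rho> \<le> (\<Sum>w\<in>UNIV. \<mu> w)"
proof -
  have "response_payoff u \<rho> m w \<le> (\<Sum>a\<in>UNIV. \<rho> m a * 1)" for m w
    unfolding response_payoff_def
    using as u by (intro sum_mono mult_left_mono) (auto simp: act_strat_def is_distr_def)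
  then have "response_payoff u \<rho> m w \<le> 1" for m w
    using as by (simp add: act_strat_def is_distr_def)
  then have "payoff \<mu> u \<sigma> \<rho> \<le> (\<Sum>w\<in>UNIV. \<mu> w * (\<Sum>m\<in>UNIV. \<sigma> w m * 1))"
    unfolding payoff_by_state
    using ms \<mu> by (intro sum_mono mult_left_mono) (auto simp: msg_strat_def is_distr_def)
  then show ?thesis
    using ms by (simp add: msg_strat_def is_distr_def)
qed

lemma obedient_outcome_payoff_le_persuasion_payoff:
  fixes \<pi> :: "'w::finite \<Rightarrow> 'a::finite \<Rightarrow> real" and M :: "'m::finite itself"
  assumes "CARD('a) \<le> CARD('m)" and "\<forall>w. 0 \<le> \<mu> w" and "\<forall>a w. uS a w \<le> 1"
    and "obedient_outcome \<mu> uR \<pi>"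
  shows "outcome_payoff \<mu> uS \<pi> \<le> persuasion_payoff \<mu> uS uR M"
proof -
  obtain \<sigma> :: "'w \<Rightarrow> 'm \<Rightarrow> real" and \<rho>
    where "msg_strat \<sigma>" "R_BR \<mu> uR \<sigma> \<rho>" "induced_outcome \<sigma> \<rho> = \<pi>"
    using obedient_outcome_implementable[OF assms(1,4)] by blast
  moreover have "bdd_above {payoff \<mu> uS \<sigma> \<rho> | (\<sigma>::'w \<Rightarrow> 'm \<Rightarrow> real) \<rho>. msg_strat \<sigma> \<and> R_BR \<mu> uR \<sigma> \<rho>}"
    using assms(2,3) by (auto intro!: bdd_aboveI payoff_le_sum_prior simp: R_BR_def)
  ultimately show ?thesis
    unfolding persuasion_payoff_def by (force intro!: cSup_upper simp: payoff_eq_outcome_payoff)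
qed

lemma exists_equilibrium:
  fixes \<mu> :: "'w::finite \<Rightarrow> real" and uS uR :: "'a::finite \<Rightarrow> 'w \<Rightarrow> real"
  shows "\<exists>(\<sigma>::'w \<Rightarrow> 'm::finite \<Rightarrow> real) \<rho>. S_BR \<mu> uS \<sigma> \<rho> \<and> R_BR \<mu> uR \<sigma> \<rho>"
proof -
  define Y where "Y b = (\<Sum>w\<in>UNIV. \<mu> w * uR b w)" for b
  have "Max (range Y) \<in> range Y" by (intro Max_in) auto
  then obtain a where "Y a = Max (range Y)" by (metis rangeE)
  then have a: "Y b \<le> Y a" for b by simp
  define \<rho> :: "'m \<Rightarrow> 'a \<Rightarrow> real" where "\<rho> m = point_mass a" for m
  have babbling: "S_BR \<mu> uS (\<lambda>w. point_mass m0) \<rho> \<and> R_BR \<mu> uR (\<lambda>w. point_mass m0) \<rho>" for m0 :: 'm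
  proof
    have "payoff \<mu> uS \<sigma> \<rho> = (\<Sum>w\<in>UNIV. \<mu> w * uS a w)" if "msg_strat \<sigma>" for \<sigma>
      using that
      by (simp add: payoff_by_state response_payoff_def \<rho>_def msg_strat_def is_distr_def
          flip: sum_distrib_right)
    then show "S_BR \<mu> uS (\<lambda>w. point_mass m0) \<rho>"
      unfolding S_BR_def msg_strat_def by (simp add: is_distr_point_mass)
    have "posterior_value \<mu> uR (\<lambda>w. point_mass m0) m b = point_mass m0 m * Y b" for m b
      unfolding posterior_value_def Y_def by (simp add: sum_distrib_left algebra_simps)
    then show "R_BR \<mu> uR (\<lambda>w. point_mass m0) \<rho>"
      unfolding R_BR_iff_supported_on_best act_strat_def \<rho>_def
      using a by (auto simp: is_distr_point_mass point_mass_def)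
  qed
  then show ?thesis by blast
qed

(* Strategy pairs are coded as vectors, where compactness is available. *)
lemma compact_equilibria:
  fixes \<mu> :: "'w::finite \<Rightarrow> real" and uS uR :: "'a::finite \<Rightarrow> 'w \<Rightarrow> real"
  shows "compact {z :: (real^('w \<times> 'm::finite)) \<times> (real^('m \<times> 'a)).
    S_BR \<mu> uS (\<lambda>w m. fst z $ (w, m)) (\<lambda>m a. snd z $ (m, a)) \<and>
    R_BR \<mu> uR (\<lambda>w m. fst z $ (w, m)) (\<lambda>m a. snd z $ (m, a))}" (is "compact ?K")
proof -
  have "closed ?K"
    unfolding S_BR_def R_BR_def msg_strat_def act_strat_def is_distr_def payoff_def
    by (intro closed_Collect_conj closed_Collect_all closed_Collect_imp open_Collect_const
        closed_Collect_le closed_Collect_eq continuous_intros)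
  moreover have "?K \<subseteq> cbox 0 (\<chi> i. 1) \<times> cbox 0 (\<chi> i. 1)"
  proof
    fix z
    assume "z \<in> ?K"
    then have "is_distr (\<lambda>m. fst z $ (w, m))" "is_distr (\<lambda>a. snd z $ (m, a))" for w m
      unfolding S_BR_def R_BR_def msg_strat_def act_strat_def by auto
    then show "z \<in> cbox 0 (\<chi> i. 1) \<times> cbox 0 (\<chi> i. 1)"
      by (cases z) (auto simp: mem_box_cart dest: is_distr_nonneg is_distr_le_1)
  qed
  then have "bounded ?K"
    by (rule bounded_subset[OF bounded_Times[OF bounded_cbox bounded_cbox]])
  ultimately show ?thesis
    by (simp add: compact_eq_bounded_closed)
qed

theorem exists_sender_optimal_equilibrium:
  fixes \<mu> :: "'w::finite \<Rightarrow> real" and uS uR :: "'a::finite \<Rightarrow> 'w \<Rightarrow> real"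
  shows "\<exists>(\<sigma>::'w \<Rightarrow> 'm::finite \<Rightarrow> real) \<rho>. S_BR \<mu> uS \<sigma> \<rho> \<and> R_BR \<mu> uR \<sigma> \<rho> \<and>
    (\<forall>(\<sigma>'::'w \<Rightarrow> 'm \<Rightarrow> real) \<rho>'. S_BR \<mu> uS \<sigma>' \<rho>' \<and> R_BR \<mu> uR \<sigma>' \<rho>' \<longrightarrow>
       payoff \<mu> uS \<sigma>' \<rho>' \<le> payoff \<mu> uS \<sigma> \<rho>)"
proof -
  define \<sigma>_of :: "(real^('w \<times> 'm)) \<times> (real^('m \<times> 'a)) \<Rightarrow> 'w \<Rightarrow> 'm \<Rightarrow> real"
    where "\<sigma>_of z w m = fst z $ (w, m)" for z w m
  define \<rho>_of :: "(real^('w \<times> 'm)) \<times> (real^('m \<times> 'a)) \<Rightarrow> 'm \<Rightarrow> 'a \<Rightarrow> real"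
    where "\<rho>_of z m a = snd z $ (m, a)" for z m a
  define K where "K = {z. S_BR \<mu> uS (\<sigma>_of z) (\<rho>_of z) \<and> R_BR \<mu> uR (\<sigma>_of z) (\<rho>_of z)}"
  have coords: "\<sigma>_of (\<chi> p. \<sigma> (fst p) (snd p), \<chi> p. \<rho> (fst p) (snd p)) = \<sigma> \<and>
      \<rho>_of (\<chi> p. \<sigma> (fst p) (snd p), \<chi> p. \<rho> (fst p) (snd p)) = \<rho>" for \<sigma> \<rho>
    by (simp add: \<sigma>_of_def \<rho>_of_def fun_eq_iff)
  obtain \<sigma>0 :: "'w \<Rightarrow> 'm \<Rightarrow> real" and \<rho>0 where "S_BR \<mu> uS \<sigma>0 \<rho>0" "R_BR \<mu> uR \<sigma>0 \<rho>0"
    using exists_equilibrium by blast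
  then have "(\<chi> p. \<sigma>0 (fst p) (snd p), \<chi> p. \<rho>0 (fst p) (snd p)) \<in> K"
    unfolding K_def using coords[of \<sigma>0 \<rho>0] by simp
  then have ne: "K \<noteq> {}" by blast
  have compact: "compact K"
    using compact_equilibria[of \<mu> uS uR] by (simp add: K_def \<sigma>_of_def[abs_def] \<rho>_of_def[abs_def])
  have cont: "continuous_on K (\<lambda>z. payoff \<mu> uS (\<sigma>_of z) (\<rho>_of z))"
    unfolding payoff_def \<sigma>_of_def \<rho>_of_def by (intro continuous_intros)
  obtain z where z: "z \<in> K"
    and max: "\<And>z'. z' \<in> K \<Longrightarrow> payoff \<mu> uS (\<sigma>_of z') (\<rho>_of z') \<le> payoff \<mu> uS (\<sigma>_of z) (\<rho>_of z)"
    using continuous_attains_sup[OF compact ne cont] by blast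
  have "payoff \<mu> uS \<sigma> \<rho> \<le> payoff \<mu> uS (\<sigma>_of z) (\<rho>_of z)"
    if "S_BR \<mu> uS \<sigma> \<rho>" "R_BR \<mu> uR \<sigma> \<rho>" for \<sigma> :: "'w \<Rightarrow> 'm \<Rightarrow> real" and \<rho>
    using that max[of "(\<chi> p. \<sigma> (fst p) (snd p), \<chi> p. \<rho> (fst p) (snd p))"] coords[of \<sigma> \<rho>]
    unfolding K_def by simp
  then show ?thesis
    using z unfolding K_def by blast
qed

section \<open>Scant indifferences\<close>

lemma independent_family_separating_direction:
  fixes R :: "'l \<Rightarrow> 'v::euclidean_space"
  assumes fin: "finite I" and dim: "dim (span (R ` I)) = card I" and l1: "l1 \<in> I"
  shows "\<exists>d. (\<forall>l\<in>I - {l1}. d \<bullet> R l = 0) \<and> 0 < d \<bullet> R l1"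
proof -
  define S where "S = R ` (I - {l1})"
  have "R l1 \<notin> span S"
  proof
    assume "R l1 \<in> span S"
    then have "span (R ` I) = span S"
      using l1 span_redundant[of "R l1" S] unfolding S_def by (metis image_insert insert_Diff)
    then have "card I \<le> card S"
      using dim fin dim_le_card'[of S] unfolding S_def by (metis dim_span finite_Diff finite_imageI)
    also have "\<dots> < card I"
      unfolding S_def using fin l1
      by (meson card_Diff1_less card_image_le finite_Diff le_less_trans)
    finally show False by simp
  qed
  obtain y z where y: "y \<in> span S" and z: "\<And>v. v \<in> span S \<Longrightarrow> orthogonal z v" and "R l1 = y + z"
    using orthogonal_subspace_decomp_exists by blast
  moreover have "z \<noteq> 0"
    using \<open>R l1 \<notin> span S\<close> y \<open>R l1 = y + z\<close> by auto
  ultimately have "0 < z \<bullet> R l1"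
    by (simp add: inner_add_right orthogonal_def)
  moreover have "z \<bullet> R l = 0" if "l \<in> I - {l1}" for l
    using z[of "R l"] that unfolding S_def orthogonal_def by (simp add: span_base)
  ultimately show ?thesis by blast
qed

lemma inner_T_row_sender: "d \<bullet> T_row uS uR a (Inl (b, True)) = (\<Sum>w\<in>UNIV. d $ w * (uS b w - uS a w))"
  unfolding T_row_def inner_vec_def by simp

lemma inner_T_row_receiver: "d \<bullet> T_row uS uR a (Inl (b, False)) = (\<Sum>w\<in>UNIV. d $ w * (uR b w - uR a w))"
  unfolding T_row_def inner_vec_def by simp

lemma inner_T_row_state: "d \<bullet> T_row uS uR a (Inr w) = d $ w"
  unfolding T_row_def by (simp add: cart_eq_inner_axis)

lemma scant_indifferences_separating_direction:
  fixes uS uR :: "'a::finite \<Rightarrow> 'w::finite \<Rightarrow> real"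
  assumes SI: "scant_indifferences uS uR" and I: "I \<subseteq> T_labels a" and l1: "l1 \<in> I"
    and "x \<noteq> 0" and orth: "\<forall>l\<in>I. x \<bullet> T_row uS uR a l = 0"
  shows "\<exists>d. (\<forall>l\<in>I - {l1}. d \<bullet> T_row uS uR a l = 0) \<and> 0 < d \<bullet> T_row uS uR a l1"
proof (rule independent_family_separating_direction[OF _ _ l1])
  show "finite I" by (rule finite_subset[OF subset_UNIV finite])
  have "span (T_row uS uR a ` I) \<subseteq> {y. x \<bullet> y = 0}"
    using orth by (intro span_minimal) (auto simp: subspace_hyperplane)
  then have "dim (span (T_row uS uR a ` I)) \<le> CARD('w) - 1"
    using dim_subset dim_hyperplane[OF \<open>x \<noteq> 0\<close>] by (metis DIM_cart DIM_real mult_1_right)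
  then show "dim (span (T_row uS uR a ` I)) = card I"
    using SI I unfolding scant_indifferences_def
    by (metis Suc_pred' diff_less less_Suc_eq_le min_def not_le zero_less_card_finite zero_less_one)
qed

lemma scant_indifferences_profitable_direction:
  fixes uS uR :: "'a::finite \<Rightarrow> 'w::finite \<Rightarrow> real" and x :: "real^'w"
  assumes SI: "scant_indifferences uS uR" and "a0 \<noteq> a1" and "x \<noteq> 0"
    and sender: "(\<Sum>w\<in>UNIV. x $ w * (uS a1 w - uS a0 w)) = 0"
    and receiver: "\<And>b. b \<in> B \<Longrightarrow> (\<Sum>w\<in>UNIV. x $ w * (uR b w - uR a0 w)) = 0"
    and states: "\<And>w. w \<in> W \<Longrightarrow> x $ w = 0"
  shows "\<exists>d :: real^'w. (\<forall>b\<in>B. (\<Sum>w\<in>UNIV. d $ w * (uR b w - uR a0 w)) = 0) \<and>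
    (\<forall>w\<in>W. d $ w = 0) \<and> 0 < (\<Sum>w\<in>UNIV. d $ w * (uS a1 w - uS a0 w))"
proof -
  define I where "I = insert (Inl (a1, True)) ((\<lambda>b. Inl (b, False)) ` (B - {a0}) \<union> Inr ` W)"
  have "I \<subseteq> T_labels a0"
    unfolding I_def T_labels_def using \<open>a0 \<noteq> a1\<close> by auto
  moreover have "\<forall>l\<in>I. x \<bullet> T_row uS uR a0 l = 0"
    unfolding I_def using sender receiver states
    by (auto simp: inner_T_row_sender inner_T_row_receiver inner_T_row_state)
  moreover have "Inl (a1, True) \<in> I"
    unfolding I_def by simp
  ultimately obtain d where d: "\<forall>l\<in>I - {Inl (a1, True)}. d \<bullet> T_row uS uR a0 l = 0"
    and profitable: "0 < d \<bullet> T_row uS uR a0 (Inl (a1, True))"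
    using scant_indifferences_separating_direction[OF SI _ _ \<open>x \<noteq> 0\<close>] by blast
  have receiver_d: "(\<Sum>w\<in>UNIV. d $ w * (uR b w - uR a0 w)) = 0" if "b \<in> B" for b
  proof (cases "b = a0")
    case False
    then have "Inl (b, False) \<in> I - {Inl (a1, True)}"
      unfolding I_def using \<open>b \<in> B\<close> by simp
    then show ?thesis
      using d inner_T_row_receiver by metis
  qed simp
  have states_d: "d $ w = 0" if "w \<in> W" for w
  proof -
    have "Inr w \<in> I - {Inl (a1, True)}"
      unfolding I_def using that by simp
    then show ?thesis
      using d inner_T_row_state by metis
  qed
  show ?thesis
  proof (intro exI[of _ d] conjI ballI)
    show "0 < (\<Sum>w\<in>UNIV. d $ w * (uS a1 w - uS a0 w))"
      using profitable unfolding inner_T_row_sender .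
  qed (fact receiver_d states_d)+
qed

lemma scant_indifferences_sender_strict:
  fixes uS uR :: "'a::finite \<Rightarrow> 'w::finite \<Rightarrow> real"
  assumes SI: "scant_indifferences uS uR" and "a \<noteq> b"
  shows "uS a w \<noteq> uS b w"
proof
  assume eq: "uS a w = uS b w"
  have sum_zero: "(\<Sum>w'\<in>UNIV. axis w 1 $ w' * (uS b w' - uS a w')) = 0"
    using eq by (simp add: axis_def if_distrib[of "\<lambda>x. x * _"] cong: if_cong)
  have nonzero: "axis w 1 \<noteq> (0 :: real^'w)"
    by (simp add: axis_eq_0_iff)
  have off_w: "axis w 1 $ w' = 0" if "w' \<in> - {w}" for w'
    using that by (simp add: axis_def)
  obtain d :: "real^'w" where off_w: "\<forall>w'\<in>- {w}. d $ w' = 0"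
    and pos: "0 < (\<Sum>w'\<in>UNIV. d $ w' * (uS b w' - uS a w'))"
    using scant_indifferences_profitable_direction[where B = "{}" and W = "- {w}",
        OF SI \<open>a \<noteq> b\<close> nonzero sum_zero emptyE off_w] by auto
  have "(\<Sum>w'\<in>UNIV. d $ w' * (uS b w' - uS a w')) = d $ w * (uS b w - uS a w)"
    using off_w by (subst sum.remove[of UNIV w]) auto
  then show False
    using pos eq by simp
qed

section \<open>Equilibria attaining the persuasion payoff\<close>

(* Dividing by the prior turns the effect on payoffs and obedience constraints into
   inner products with f, which is what scant indifferences control. *)
definition shift_direction ::
  "('w \<Rightarrow> real) \<Rightarrow> ('w \<Rightarrow> real) \<Rightarrow> 'a \<Rightarrow> 'a \<Rightarrow> 'w \<Rightarrow> 'a \<Rightarrow> real" where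
  "shift_direction \<mu> f a b w c = f w / \<mu> w * (point_mass b c - point_mass a c)"

lemma sum_shift_direction:
  "(\<Sum>c\<in>UNIV. shift_direction \<mu> f a (b::'a::finite) w c) = 0"
proof -
  have "(\<Sum>c\<in>UNIV. point_mass b c - point_mass a c) = 0"
    using sum_point_mass_mult[of b "\<lambda>_. 1"] sum_point_mass_mult[of a "\<lambda>_. 1"]
    by (simp add: sum_subtractf)
  then show ?thesis
    unfolding shift_direction_def by (simp flip: sum_distrib_left sum_divide_distrib)
qed

lemma outcome_payoff_shift_direction:
  assumes "\<And>w. \<mu> w \<noteq> 0"
  shows "outcome_payoff \<mu> u (shift_direction \<mu> f a b) = (\<Sum>w\<in>UNIV. f w * (u b w - u a w))"
proof -
  have "\<mu> w * shift_direction \<mu> f a b w c * u c w = f w * (point_mass b c * u c w - point_mass a c * u c w)" for w c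
    using assms[of w] by (simp add: shift_direction_def algebra_simps)
  then show ?thesis
    unfolding outcome_payoff_def by (simp add: sum_subtractf flip: sum_distrib_left)
qed

lemma obedience_gain_shift_direction:
  assumes "\<And>w. \<mu> w \<noteq> 0"
  shows "obedience_gain \<mu> u (shift_direction \<mu> f a b) c c' =
    (point_mass b c - point_mass a c) * (\<Sum>w\<in>UNIV. f w * (u c w - u c' w))"
  using assms unfolding obedience_gain_def shift_direction_def
  by (simp add: sum_distrib_left algebra_simps)

locale persuasion_optimal_equilibrium =
  fixes \<mu> :: "'w::finite \<Rightarrow> real" and uS uR :: "'a::finite \<Rightarrow> 'w \<Rightarrow> real"
    and \<sigma> :: "'w \<Rightarrow> 'm::finite \<Rightarrow> real" and \<rho> :: "'m \<Rightarrow> 'a \<Rightarrow> real"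
  assumes prior_pos: "\<And>w. 0 < \<mu> w"
    and scant: "scant_indifferences uS uR"
    and sender_BR: "S_BR \<mu> uS \<sigma> \<rho>" and receiver_BR: "R_BR \<mu> uR \<sigma> \<rho>"
    and optimal: "\<And>\<pi>. obedient_outcome \<mu> uR \<pi> \<Longrightarrow> outcome_payoff \<mu> uS \<pi> \<le> payoff \<mu> uS \<sigma> \<rho>"
begin

abbreviation outcome :: "'w \<Rightarrow> 'a \<Rightarrow> real" where
  "outcome \<equiv> induced_outcome \<sigma> \<rho>"

lemma msg_strat: "msg_strat \<sigma>"
  using sender_BR unfolding S_BR_def by blast

lemma act_strat: "act_strat \<rho>"
  using receiver_BR unfolding R_BR_def by blast

lemma \<sigma>_nonneg: "0 \<le> \<sigma> w m"
  using msg_strat unfolding msg_strat_def by (blast dest: is_distr_nonneg)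

lemma \<rho>_nonneg: "0 \<le> \<rho> m a"
  using act_strat unfolding act_strat_def by (blast dest: is_distr_nonneg)

lemma receiver_best:
  "0 < \<rho> m a \<Longrightarrow> posterior_value \<mu> uR \<sigma> m b \<le> posterior_value \<mu> uR \<sigma> m a"
  using receiver_BR unfolding R_BR_iff_supported_on_best by blast

lemma obedient_outcome: "obedient_outcome \<mu> uR outcome"
  by (rule R_BR_obedient_outcome[OF msg_strat receiver_BR])

lemma outcome_ge: "\<sigma> w m * \<rho> m c \<le> outcome w c"
  unfolding induced_outcome_def
  by (rule member_le_sum) (auto intro: mult_nonneg_nonneg \<sigma>_nonneg \<rho>_nonneg)

lemma obedience_gain_outcome_ge:
  "\<rho> m a * (posterior_value \<mu> uR \<sigma> m a - posterior_value \<mu> uR \<sigma> m b) \<le> obedience_gain \<mu> uR outcome a b"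
proof -
  have "0 \<le> \<rho> m' a * (posterior_value \<mu> uR \<sigma> m' a - posterior_value \<mu> uR \<sigma> m' b)" for m'
    using receiver_best[of m' a b] \<rho>_nonneg[of m' a] by (cases "\<rho> m' a = 0") auto
  then show ?thesis
    unfolding obedience_gain_induced_outcome by (intro member_le_sum) auto
qed

lemma no_improving_direction:
  assumes "\<And>w. (\<Sum>c\<in>UNIV. D w c) = 0"
    and "\<And>w c. 0 < outcome w c \<or> 0 \<le> D w c"
    and "\<And>a b. 0 < obedience_gain \<mu> uR outcome a b \<or> 0 \<le> obedience_gain \<mu> uR D a b"
  shows "outcome_payoff \<mu> uS D \<le> 0"
proof -
  obtain e where "0 < e" and "obedient_outcome \<mu> uR (\<lambda>w c. outcome w c + e * D w c)"
    using obedient_outcome_perturb[OF obedient_outcome assms] by blast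
  then have "outcome_payoff \<mu> uS (\<lambda>w c. outcome w c + e * D w c) \<le> outcome_payoff \<mu> uS outcome"
    using optimal payoff_eq_outcome_payoff[of \<mu> uS \<sigma> \<rho>] by simp
  then have "outcome_payoff \<mu> uS outcome + e * outcome_payoff \<mu> uS D \<le> outcome_payoff \<mu> uS outcome"
    unfolding outcome_payoff_perturb .
  then show ?thesis
    using \<open>0 < e\<close> by (simp add: mult_le_0_iff)
qed

lemma optimal_within_support:
  assumes "act_strat \<rho>'" and support: "\<And>m c. 0 < \<rho>' m c \<Longrightarrow> 0 < \<rho> m c"
  shows "payoff \<mu> uS \<sigma> \<rho>' \<le> payoff \<mu> uS \<sigma> \<rho>"
proof -
  have "R_BR \<mu> uR \<sigma> \<rho>'"
    unfolding R_BR_iff_supported_on_best using assms(1) receiver_best support by blast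
  then show ?thesis
    using optimal[OF R_BR_obedient_outcome[OF msg_strat]] by (simp add: payoff_eq_outcome_payoff)
qed

lemma sender_indifferent_on_support:
  assumes "0 < \<rho> m a" and "0 < \<rho> m b"
  shows "posterior_value \<mu> uS \<sigma> m a = posterior_value \<mu> uS \<sigma> m b"
proof -
  have "posterior_value \<mu> uS \<sigma> m b \<le> posterior_value \<mu> uS \<sigma> m a"
    if "0 < \<rho> m a" "0 < \<rho> m b" for a b
  proof -
    have "act_strat (\<rho>(m := move_mass (\<rho> m) a b))"
      using act_strat by (simp add: act_strat_def is_distr_move_mass)
    moreover have "0 < \<rho> m' c" if "0 < (\<rho>(m := move_mass (\<rho> m) a b)) m' c" for m' c
      using that \<open>0 < \<rho> m b\<close> \<rho>_nonneg[of m a]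
      by (auto simp: move_mass_def point_mass_def split: if_splits)
    ultimately have "payoff \<mu> uS \<sigma> (\<rho>(m := move_mass (\<rho> m) a b)) \<le> payoff \<mu> uS \<sigma> \<rho>"
      by (rule optimal_within_support)
    then show ?thesis
      using \<open>0 < \<rho> m a\<close> unfolding payoff_move_response_mass by (simp add: mult_le_0_iff)
  qed
  then show ?thesis
    using assms by (meson order_antisym)
qed


lemma no_improving_shift:
  assumes support_a: "\<And>w. 0 < f w \<Longrightarrow> 0 < outcome w a"
    and support_b: "\<And>w. f w < 0 \<Longrightarrow> 0 < outcome w b"
    and slack: "\<And>c c'. 0 < obedience_gain \<mu> uR outcome c c' \<or>
      0 \<le> (point_mass b c - point_mass a c) * (\<Sum>w\<in>UNIV. f w * (uR c w - uR c' w))"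
  shows "(\<Sum>w\<in>UNIV. f w * (uS b w - uS a w)) \<le> 0"
proof -
  have \<mu>_nonzero: "\<mu> w \<noteq> 0" for w
    using prior_pos[of w] by simp
  have "outcome_payoff \<mu> uS (shift_direction \<mu> f a b) \<le> 0"
  proof (rule no_improving_direction[OF sum_shift_direction])
    fix w c
    show "0 < outcome w c \<or> 0 \<le> shift_direction \<mu> f a b w c"
    proof (cases "c = a \<and> 0 < f w \<or> c = b \<and> f w < 0")
      case True
      then show ?thesis
        using support_a support_b by blast
    next
      case False
      then have "0 \<le> f w / \<mu> w * (point_mass b c - point_mass a c)"
        using prior_pos[of w] by (auto simp: point_mass_def zero_le_divide_iff not_less)
      then show ?thesis
        unfolding shift_direction_def ..
    qed
  next
    fix c c'
    show "0 < obedience_gain \<mu> uR outcome c c' \<or> 0 \<le> obedience_gain \<mu> uR (shift_direction \<mu> f a b) c c'"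
      using slack unfolding obedience_gain_shift_direction[OF \<mu>_nonzero] .
  qed
  then show ?thesis
    unfolding outcome_payoff_shift_direction[OF \<mu>_nonzero] .
qed

(* The posterior after m is orthogonal to the sender row a1 - a0 and to all binding rows;
   scant indifferences separate the sender row from the binding ones. *)
lemma indifferent_profitable_direction:
  assumes "0 < \<sigma> w m" and a0: "0 < \<rho> m a0" and a1: "0 < \<rho> m a1" and "a0 \<noteq> a1"
  shows "\<exists>d :: real^'w.
    (\<forall>b \<in> {b. posterior_value \<mu> uR \<sigma> m b = posterior_value \<mu> uR \<sigma> m a0}.
      (\<Sum>w'\<in>UNIV. d $ w' * (uR b w' - uR a0 w')) = 0) \<and>
    (\<forall>w' \<in> {w. \<sigma> w m = 0}. d $ w' = 0) \<and> 0 < (\<Sum>w'\<in>UNIV. d $ w' * (uS a1 w' - uS a0 w'))"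
proof -
  define x :: "real^'w" where "x = (\<chi> w. \<mu> w * \<sigma> w m)"
  have inner_x: "(\<Sum>w'\<in>UNIV. x $ w' * (u b w' - u a0 w')) =
      posterior_value \<mu> u \<sigma> m b - posterior_value \<mu> u \<sigma> m a0" for u b
    unfolding x_def posterior_value_def by (simp add: sum_subtractf algebra_simps)
  have "x $ w \<noteq> 0"
    using \<open>0 < \<sigma> w m\<close> prior_pos[of w] unfolding x_def by simp
  then have "x \<noteq> 0"
    by (metis zero_index)
  have sender: "(\<Sum>w'\<in>UNIV. x $ w' * (uS a1 w' - uS a0 w')) = 0"
    unfolding inner_x using sender_indifferent_on_support[OF a0 a1] by simp
  have receiver: "(\<Sum>w'\<in>UNIV. x $ w' * (uR b w' - uR a0 w')) = 0"
    if "b \<in> {b. posterior_value \<mu> uR \<sigma> m b = posterior_value \<mu> uR \<sigma> m a0}" for b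
    using that unfolding inner_x by simp
  have states: "x $ w' = 0" if "w' \<in> {w. \<sigma> w m = 0}" for w'
    using that unfolding x_def by simp
  show ?thesis
    by (rule scant_indifferences_profitable_direction[OF scant \<open>a0 \<noteq> a1\<close> \<open>x \<noteq> 0\<close> sender receiver states])
qed

lemma response_pure_on_path:
  assumes "0 < \<sigma> w m" and a0: "0 < \<rho> m a0" and a1: "0 < \<rho> m a1"
  shows "a0 = a1"
proof (rule ccontr)
  assume "a0 \<noteq> a1"
  let ?X = "posterior_value \<mu> uR \<sigma> m"
  have X_a1: "?X a1 = ?X a0"
    using receiver_best[OF a0, of a1] receiver_best[OF a1, of a0] by simp
  obtain d :: "real^'w" where off_path: "\<And>w'. \<sigma> w' m = 0 \<Longrightarrow> d $ w' = 0"
    and indifferent: "\<And>b. ?X b = ?X a0 \<Longrightarrow> (\<Sum>w'\<in>UNIV. d $ w' * (uR b w' - uR a0 w')) = 0"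
    and profitable: "0 < (\<Sum>w'\<in>UNIV. d $ w' * (uS a1 w' - uS a0 w'))"
    using indifferent_profitable_direction[OF assms \<open>a0 \<noteq> a1\<close>] by auto
  have on_path: "0 < outcome w' c" if "d $ w' \<noteq> 0" and "0 < \<rho> m c" for w' c
  proof -
    have "0 < \<sigma> w' m"
      using off_path that(1) \<sigma>_nonneg[of w' m] by (metis less_eq_real_def)
    then show ?thesis
      using outcome_ge[of w' m c] that(2) by (metis mult_pos_pos order_less_le_trans)
  qed
  have "(\<Sum>w'\<in>UNIV. d $ w' * (uS a1 w' - uS a0 w')) \<le> 0"
  proof (rule no_improving_shift)
    fix c b
    show "0 < obedience_gain \<mu> uR outcome c b \<or>
      0 \<le> (point_mass a1 c - point_mass a0 c) * (\<Sum>w'\<in>UNIV. d $ w' * (uR c w' - uR b w'))"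
    proof (cases "(c = a0 \<or> c = a1) \<and> ?X b \<noteq> ?X a0")
      case True
      then have "0 < \<rho> m c * (?X c - ?X b)"
        using a0 a1 X_a1 receiver_best[OF a0, of b] by auto
      then show ?thesis
        using obedience_gain_outcome_ge[of m c b] by simp
    next
      case False
      then have "c \<notin> {a0, a1} \<or> ?X c = ?X a0 \<and> ?X b = ?X a0"
        using X_a1 by auto
      then have "(point_mass a1 c - point_mass a0 c) * (\<Sum>w'\<in>UNIV. d $ w' * (uR c w' - uR b w')) = 0"
        using indifferent[of b] indifferent[of c]
        by (auto simp: point_mass_def right_diff_distrib sum_subtractf)
      then show ?thesis by (metis order_refl)
    qed
  qed (use on_path a0 a1 in auto)
  then show False
    using profitable by simp
qed

lemma response_point_mass_on_path:
  assumes "0 < \<sigma> w m"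
  shows "\<exists>a. \<rho> m = point_mass a"
proof -
  have "is_distr (\<rho> m)"
    using act_strat unfolding act_strat_def by blast
  obtain a where "0 < \<rho> m a"
    using is_distr_ex_pos[OF \<open>is_distr (\<rho> m)\<close>] by blast
  have "\<rho> m c = 0" if "c \<noteq> a" for c
  proof (rule ccontr)
    assume "\<rho> m c \<noteq> 0"
    then have "0 < \<rho> m c"
      using \<rho>_nonneg[of m c] by simp
    then show False
      using response_pure_on_path[OF assms \<open>0 < \<rho> m a\<close>] that by blast
  qed
  with \<open>is_distr (\<rho> m)\<close> have "\<rho> m = point_mass a"
    by (rule is_distr_eq_point_mass)
  then show ?thesis ..
qed

lemma response_unique_on_state:
  assumes "0 < \<sigma> w m" "0 < \<sigma> w m'" and "\<rho> m = point_mass a" "\<rho> m' = point_mass a'"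
  shows "a = a'"
proof -
  have "response_payoff uS \<rho> m' w = response_payoff uS \<rho> m w"
    by (intro order_antisym S_BR_message_optimal[OF sender_BR prior_pos] assms(1,2))
  then have "uS a w = uS a' w"
    using assms(3,4) by (simp add: response_payoff_def)
  then show ?thesis
    using scant_indifferences_sender_strict[OF scant] by metis
qed

definition induced_action :: "'w \<Rightarrow> 'a" where
  "induced_action w = (SOME a. \<exists>m. 0 < \<sigma> w m \<and> \<rho> m = point_mass a)"

lemma response_on_path:
  assumes "0 < \<sigma> w m"
  shows "\<rho> m = point_mass (induced_action w)"
proof -
  obtain a where "\<rho> m = point_mass a"
    using response_point_mass_on_path[OF assms] by blast
  then have "\<exists>a m. 0 < \<sigma> w m \<and> \<rho> m = point_mass a"
    using assms by blast
  then have "\<exists>m. 0 < \<sigma> w m \<and> \<rho> m = point_mass (induced_action w)"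
    unfolding induced_action_def by (rule someI_ex)
  then show ?thesis
    using response_unique_on_state[OF assms] \<open>\<rho> m = point_mass a\<close> by metis
qed

lemma outcome_point_mass: "outcome w = point_mass (induced_action w)"
proof
  fix c
  have "\<sigma> w m * \<rho> m c = \<sigma> w m * point_mass (induced_action w) c" for m
    using response_on_path[of w m] \<sigma>_nonneg[of w m] by (cases "\<sigma> w m = 0") auto
  then have "outcome w c = (\<Sum>m\<in>UNIV. \<sigma> w m * point_mass (induced_action w) c)"
    unfolding induced_outcome_def by (rule sum.cong[OF refl])
  also have "\<dots> = (\<Sum>m\<in>UNIV. \<sigma> w m) * point_mass (induced_action w) c"
    by (rule sum_distrib_right[symmetric])
  finally have "outcome w c = (\<Sum>m\<in>UNIV. \<sigma> w m) * point_mass (induced_action w) c" .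
  then show "outcome w c = point_mass (induced_action w) c"
    using msg_strat unfolding msg_strat_def is_distr_def by simp
qed

lemma obedience_gain_outcome:
  "obedience_gain \<mu> u outcome c b = (\<Sum>w | induced_action w = c. \<mu> w * (u c w - u b w))"
proof -
  have "obedience_gain \<mu> u outcome c b =
      (\<Sum>w\<in>UNIV. if induced_action w = c then \<mu> w * (u c w - u b w) else 0)"
    unfolding obedience_gain_def outcome_point_mass by (intro sum.cong) (auto simp: point_mass_def)
  then show ?thesis
    by (simp add: sum.If_cases)
qed

lemma obedience_gain_outcome_pos:
  assumes PUR: "partitional_unique_response \<mu> uR"
    and "induced_action \<omega> = c" and "c \<noteq> b"
  shows "0 < obedience_gain \<mu> uR outcome c b"
proof -
  define F where "F = (\<lambda>b'. \<Sum>w | induced_action w = c. \<mu> w * uR b' w)"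
  have gain: "obedience_gain \<mu> uR outcome c b' = F c - F b'" for b'
    unfolding obedience_gain_outcome F_def by (simp add: algebra_simps sum_subtractf)
  have le_c: "F b' \<le> F c" for b'
  proof -
    have "0 \<le> obedience_gain \<mu> uR outcome c b'"
      using obedient_outcome unfolding obedient_outcome_def by blast
    then show ?thesis
      unfolding gain by simp
  qed
  have "{w. induced_action w = c} \<noteq> {}"
    using assms(2) by blast
  then have "is_singleton (argmax_set F)"
    unfolding F_def by (rule PUR[unfolded partitional_unique_response_def, rule_format])
  then obtain x where "argmax_set F = {x}"
    unfolding is_singleton_def by blast
  moreover have "c \<in> argmax_set F"
    using le_c unfolding argmax_set_def by blast
  ultimately have "b \<notin> argmax_set F"
    using \<open>c \<noteq> b\<close> by simp
  then obtain b' where "F b < F b'"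
    unfolding argmax_set_def by (auto simp: not_le)
  then show ?thesis
    using le_c[of b'] unfolding gain by simp
qed


(* Move the mass of the state to c: both players strictly prefer c there, and partitional
   unique response makes the obedience constraints of the old action slack. *)
lemma induced_action_at_inclusive_state:
  assumes PUR: "partitional_unique_response \<mu> uR"
    and inclusive: "\<forall>a'. a' \<noteq> c \<longrightarrow> uS a' \<omega> < uS c \<omega> \<and> uR a' \<omega> < uR c \<omega>"
  shows "induced_action \<omega> = c"
proof (rule ccontr)
  define a where "a = induced_action \<omega>"
  assume "induced_action \<omega> \<noteq> c"
  then have "a \<noteq> c" unfolding a_def .
  have "(\<Sum>w\<in>UNIV. \<mu> w * point_mass \<omega> w * (uS c w - uS a w)) \<le> 0"
  proof (rule no_improving_shift)
    fix w
    assume "0 < \<mu> w * point_mass \<omega> w"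
    then show "0 < outcome w a"
      by (simp add: outcome_point_mass a_def point_mass_def split: if_splits)
  next
    fix x b
    have "0 < obedience_gain \<mu> uR outcome x b \<or>
      0 \<le> (point_mass c x - point_mass a x) * (\<mu> \<omega> * (uR x \<omega> - uR b \<omega>))"
    proof (cases "x = a \<and> b \<noteq> a")
      case True
      then have "x = a" "a \<noteq> b" by auto
      then show ?thesis
        using obedience_gain_outcome_pos[OF PUR a_def[symmetric]] by simp
    next
      case False
      have "0 \<le> uR c \<omega> - uR b \<omega>"
        using inclusive by (cases "b = c") (auto simp: less_imp_le)
      then have "0 \<le> (point_mass c x - point_mass a x) * (uR x \<omega> - uR b \<omega>)"
        using False \<open>a \<noteq> c\<close> by (cases "x = c") (auto simp: point_mass_def)
      then show ?thesis
        using prior_pos[of \<omega>] by (simp add: mult.left_commute)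
    qed
    then show "0 < obedience_gain \<mu> uR outcome x b \<or>
      0 \<le> (point_mass c x - point_mass a x) * (\<Sum>w\<in>UNIV. \<mu> w * point_mass \<omega> w * (uR x w - uR b w))"
      unfolding sum_weighted_point_mass .
  qed (use prior_pos[of \<omega>] in \<open>simp add: point_mass_def split: if_splits\<close>)
  moreover have "uS a \<omega> < uS c \<omega>"
    using inclusive \<open>a \<noteq> c\<close> by blast
  ultimately show False
    unfolding sum_weighted_point_mass using prior_pos[of \<omega>] by (simp add: mult_le_0_iff)
qed

lemma induced_action_sender_optimal:
  assumes JI: "jointly_inclusive uS uR" and PUR: "partitional_unique_response \<mu> uR"
  shows "uS c w \<le> uS (induced_action w) w"
proof -
  obtain \<omega> where "\<forall>a'. a' \<noteq> c \<longrightarrow> uS a' \<omega> < uS c \<omega> \<and> uR a' \<omega> < uR c \<omega>"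
    using JI unfolding jointly_inclusive_def by blast
  then have c: "induced_action \<omega> = c"
    by (rule induced_action_at_inclusive_state[OF PUR])
  obtain m where m: "0 < \<sigma> \<omega> m"
    using is_distr_ex_pos msg_strat unfolding msg_strat_def by blast
  obtain m' where m': "0 < \<sigma> w m'"
    using is_distr_ex_pos msg_strat unfolding msg_strat_def by blast
  have "response_payoff uS \<rho> m w \<le> response_payoff uS \<rho> m' w"
    by (rule S_BR_message_optimal[OF sender_BR prior_pos m'])
  then show ?thesis
    using response_on_path[OF m] response_on_path[OF m'] c by (simp add: response_payoff_def)
qed

theorem felicitous:
  assumes JI: "jointly_inclusive uS uR" and PUR: "partitional_unique_response \<mu> uR"
  shows "felicitous \<mu> uS uR"
  unfolding felicitous_def Let_def
proof (intro allI impI)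
  fix a
  have cell: "{w. a \<in> argmax_set (\<lambda>a'. uS a' w)} = {w. induced_action w = a}"
  proof (intro Collect_cong iffI)
    fix w
    assume "a \<in> argmax_set (\<lambda>a'. uS a' w)"
    then have "uS (induced_action w) w = uS a w"
      using induced_action_sender_optimal[OF JI PUR, of a w] unfolding argmax_set_def
      by (simp add: order_antisym)
    then show "induced_action w = a"
      using scant_indifferences_sender_strict[OF scant] by metis
  next
    fix w
    assume "induced_action w = a"
    then show "a \<in> argmax_set (\<lambda>a'. uS a' w)"
      using induced_action_sender_optimal[OF JI PUR] unfolding argmax_set_def by blast
  qed
  have "0 \<le> obedience_gain \<mu> uR outcome a b" for b
    using obedient_outcome unfolding obedient_outcome_def by blast
  then have "a \<in> argmax_set (\<lambda>a'. \<Sum>w | induced_action w = a. \<mu> w * uR a' w)"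
    unfolding argmax_set_def obedience_gain_outcome by (simp add: sum_subtractf algebra_simps)
  then show "a \<in> argmax_set (\<lambda>a'. \<Sum>w\<in>{w. a \<in> argmax_set (\<lambda>a'. uS a' w)}. \<mu> w * uR a' w)"
    by (simp only: cell)
qed

end

theorem lemma8:
  fixes \<mu>0 :: "'w::finite \<Rightarrow> real"
    and uS uR :: "'a::finite \<Rightarrow> 'w \<Rightarrow> real"
    and M :: "'m::finite itself"
  assumes prior_pos: "\<forall>w. \<mu>0 w > 0"
    and prior_sum: "(\<Sum>w\<in>UNIV. \<mu>0 w) = 1"
    and card_M: "CARD('m) > max CARD('w) CARD('a)"
    and uS_range: "\<forall>a w. 0 \<le> uS a w \<and> uS a w \<le> 1"
    and uR_range: "\<forall>a w. 0 \<le> uR a w \<and> uR a w \<le> 1"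
    and JI: "jointly_inclusive uS uR"
    and PUR: "partitional_unique_response \<mu>0 uR"
    and SI: "scant_indifferences uS uR"
    and no_value: "commitment_no_value \<mu>0 uS uR M"
  shows "felicitous \<mu>0 uS uR"
proof -
  obtain \<sigma> :: "'w \<Rightarrow> 'm \<Rightarrow> real" and \<rho> :: "'m \<Rightarrow> 'a \<Rightarrow> real"
    where S: "S_BR \<mu>0 uS \<sigma> \<rho>" and R: "R_BR \<mu>0 uR \<sigma> \<rho>"
      and best: "\<forall>(\<sigma>'::'w \<Rightarrow> 'm \<Rightarrow> real) \<rho>'. S_BR \<mu>0 uS \<sigma>' \<rho>' \<and> R_BR \<mu>0 uR \<sigma>' \<rho>' \<longrightarrow> payoff \<mu>0 uS \<sigma>' \<rho>' \<le> payoff \<mu>0 uS \<sigma> \<rho>"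
    using exists_sender_optimal_equilibrium[of \<mu>0 uS uR] by blast
  have "cheap_talk_payoff \<mu>0 uS uR M = payoff \<mu>0 uS \<sigma> \<rho>"
    unfolding cheap_talk_payoff_def by (rule cSup_eq_maximum) (use S R best in auto)
  then have persuasion: "persuasion_payoff \<mu>0 uS uR M = payoff \<mu>0 uS \<sigma> \<rho>"
    using no_value unfolding commitment_no_value_def by simp
  interpret persuasion_optimal_equilibrium \<mu>0 uS uR \<sigma> \<rho>
  proof
    fix \<pi> :: "'w \<Rightarrow> 'a \<Rightarrow> real"
    assume "obedient_outcome \<mu>0 uR \<pi>"
    moreover have "CARD('a) \<le> CARD('m)"
      using card_M by simp
    ultimately show "outcome_payoff \<mu>0 uS \<pi> \<le> payoff \<mu>0 uS \<sigma> \<rho>"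
      using obedient_outcome_payoff_le_persuasion_payoff[of \<mu>0 uS uR \<pi> M] prior_pos uS_range persuasion
      by (simp add: less_imp_le)
  qed (use prior_pos SI S R in auto)
  show ?thesis
    by (rule felicitous[OF JI PUR])
qed

end
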